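(* Let $M$ be an affine manifold (affine subspace) of $\mathbb{R}^n$ and let $f,g$ be quadratic functions on $\mathbb{R}^n$ (i.e., of the form $x^TQx+q^Tx+c$ with $Q$ real symmetric, $q\in\mathbb{R}^n$, $c\in\mathbb{R}$, no definiteness assumed). Then the set $$C:=\{(f(x),g(x)) : x\in M\}+\mathbb{R}^2_+$$ is convex. *)

theory Defs
  imports "HOL-Analysis.Analysis"
begin

definition quadratic_fun :: "real^'n^'n \<Rightarrow> real^'n \<Rightarrow> real \<Rightarrow> (real^'n \<Rightarrow> real)" where
  "quadratic_fun Q q c = (\<lambda>x. x \<bullet> (Q *v x) + q \<bullet> x + c)"

definition nonneg_orthant2 :: "(real \<times> real) set" where
  "nonneg_orthant2 = {p. 0 \<le> fst p \<and> 0 \<le> snd p}"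

definition minkowski_sum :: "'a::plus set \<Rightarrow> 'a set \<Rightarrow> 'a set" where
  "minkowski_sum A B = {a + b | a b. a \<in> A \<and> b \<in> B}"

end

theory Submission
  imports Defs "HOL-Library.Quadratic_Discriminant"
begin

text \<open>Restricted to a line of M through two points x and y, the pair (f, g) becomes a pair of
real quadratic polynomials in one variable, so it suffices to find, for each point of the chord
between (f x, g x) and (f y, g y), a parameter at which both polynomials lie weakly below it.
If both leading coefficients are nonnegative, the chord parameter itself works. Otherwise one
polynomial, say the first, is concave and lies above its chord there; it therefore has a root
on either side of the chord parameter. Writing h1, h2 for the gaps between the polynomials and
their chords, the combination a2 h1 - a1 h2 of the leading coefficients a1, a2 cancels the
squares, so it is linear and vanishes at the chord parameter; at the root of h1 on the correct
side it has the sign forcing h2 to be nonpositive as well.\<close>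

lemma mem_minkowski_sum_nonneg_orthant2:
  "p \<in> minkowski_sum S nonneg_orthant2 \<longleftrightarrow> (\<exists>a\<in>S. fst a \<le> fst p \<and> snd a \<le> snd p)"
proof
  assume "\<exists>a\<in>S. fst a \<le> fst p \<and> snd a \<le> snd p"
  then obtain a where "a \<in> S" "fst a \<le> fst p" "snd a \<le> snd p" by blast
  then have "p = a + (p - a)" "p - a \<in> nonneg_orthant2"
    by (auto simp: nonneg_orthant2_def)
  with \<open>a \<in> S\<close> show "p \<in> minkowski_sum S nonneg_orthant2"
    unfolding minkowski_sum_def by blast
qed (force simp: minkowski_sum_def nonneg_orthant2_def)

lemma convex_minkowski_sum_nonneg_orthant2:
  assumes below_chord: "\<And>a b t. a \<in> S \<Longrightarrow> b \<in> S \<Longrightarrow> 0 \<le> t \<Longrightarrow> t \<le> 1 \<Longrightarrow>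
    \<exists>c\<in>S. fst c \<le> (1 - t) * fst a + t * fst b \<and> snd c \<le> (1 - t) * snd a + t * snd b"
  shows "convex (minkowski_sum S nonneg_orthant2)"
  unfolding convex_alt
proof (intro ballI allI impI)
  fix p r :: "real \<times> real" and t :: real
  assume "p \<in> minkowski_sum S nonneg_orthant2" "r \<in> minkowski_sum S nonneg_orthant2"
    and t: "0 \<le> t \<and> t \<le> 1"
  then obtain a b where ab: "a \<in> S" "b \<in> S"
    and a: "fst a \<le> fst p" "snd a \<le> snd p" and b: "fst b \<le> fst r" "snd b \<le> snd r"
    unfolding mem_minkowski_sum_nonneg_orthant2 by blast
  obtain c where "c \<in> S" and c: "fst c \<le> (1 - t) * fst a + t * fst b"
    "snd c \<le> (1 - t) * snd a + t * snd b"
    using below_chord[OF ab] t by blast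
  have "(1 - t) * fst a + t * fst b \<le> (1 - t) * fst p + t * fst r"
    "(1 - t) * snd a + t * snd b \<le> (1 - t) * snd p + t * snd r"
    using a b t by (intro add_mono mult_left_mono; simp)+
  with \<open>c \<in> S\<close> c show "(1 - t) *\<^sub>R p + t *\<^sub>R r \<in> minkowski_sum S nonneg_orthant2"
    unfolding mem_minkowski_sum_nonneg_orthant2 by force
qed

lemma quadratic_roots_around:
  fixes a b c l :: real
  assumes "a \<noteq> 0" and "a * (a * l\<^sup>2 + b * l + c) \<le> 0"
  shows "\<exists>r1 r2. r1 \<le> l \<and> l \<le> r2 \<and> a * r1\<^sup>2 + b * r1 + c = 0 \<and> a * r2\<^sup>2 + b * r2 + c = 0"
proof -
  have "4 * (a * (a * l\<^sup>2 + b * l + c)) = (2 * a * l + b)\<^sup>2 - discrim a b c"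
    by (simp add: discrim_def power2_eq_square algebra_simps)
  then have discrim_nonneg: "discrim a b c \<ge> 0"
    using assms(2) zero_le_power2[of "2 * a * l + b"] by linarith
  define rp where "rp = (- b + sqrt (discrim a b c)) / (2 * a)"
  define rm where "rm = (- b - sqrt (discrim a b c)) / (2 * a)"
  have roots: "a * rp\<^sup>2 + b * rp + c = 0" "a * rm\<^sup>2 + b * rm + c = 0"
    using discriminant_nonneg[OF \<open>a \<noteq> 0\<close> discrim_nonneg] rp_def rm_def by blast+
  have "(rp - l) * (rm - l) = (a * l\<^sup>2 + b * l + c) / a"
    using \<open>a \<noteq> 0\<close> discrim_nonneg
    by (simp add: rp_def rm_def discrim_def field_simps power2_eq_square)
  also have "\<dots> = a * (a * l\<^sup>2 + b * l + c) / a\<^sup>2"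
    using \<open>a \<noteq> 0\<close> by (simp add: power2_eq_square)
  also have "\<dots> \<le> 0"
    using assms(2) by (simp add: divide_nonpos_pos \<open>a \<noteq> 0\<close>)
  finally have "min rp rm \<le> l \<and> l \<le> max rp rm"
    by (smt (verit) mult_pos_pos mult_neg_neg)
  with roots show ?thesis
    by (metis min_def max_def)
qed

lemma two_quadratics_below_chord_concave:
  fixes a1 b1 a2 b2 l :: real
  assumes "a1 < 0" and "0 \<le> l" and "l \<le> 1"
  shows "\<exists>s. a1 * s\<^sup>2 + b1 * s \<le> l * (a1 + b1) \<and> a2 * s\<^sup>2 + b2 * s \<le> l * (a2 + b2)"
proof -
  define D where "D = a2 * b1 - a1 * b2"
  have "a1 * (a1 * l\<^sup>2 + b1 * l + - l * (a1 + b1)) = a1\<^sup>2 * (l * (l - 1))"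
    by (simp add: power2_eq_square algebra_simps)
  also have "\<dots> \<le> 0"
    using assms(2,3) by (simp add: mult_nonneg_nonpos)
  finally obtain r1 r2 where around: "r1 \<le> l" "l \<le> r2"
    and roots: "a1 * r1\<^sup>2 + b1 * r1 + - l * (a1 + b1) = 0" "a1 * r2\<^sup>2 + b1 * r2 + - l * (a1 + b1) = 0"
    using quadratic_roots_around[of a1] \<open>a1 < 0\<close> by (metis less_irrefl)
  obtain r where root: "a1 * r\<^sup>2 + b1 * r = l * (a1 + b1)" and sign: "D * (r - l) \<le> 0"
  proof (cases "D \<ge> 0")
    case True
    then show ?thesis
      using that[of r1] roots(1) around(1) by (simp add: mult_nonneg_nonpos)
  next
    case False
    then show ?thesis
      using that[of r2] roots(2) around(2) by (simp add: mult_nonpos_nonneg)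
  qed
  \<comment> \<open>a2 h1 s - a1 h2 s = D (s - l) for the chord gaps h_i s = a_i s^2 + b_i s - l (a_i + b_i)\<close>
  have "- a1 * (a2 * r\<^sup>2 + b2 * r - l * (a2 + b2)) = D * (r - l)"
    using root unfolding D_def by (simp add: algebra_simps power2_eq_square) algebra
  with sign \<open>a1 < 0\<close> have "a2 * r\<^sup>2 + b2 * r \<le> l * (a2 + b2)"
    by (smt (verit) mult_pos_pos)
  with root show ?thesis by (intro exI[of _ r]) simp
qed

lemma two_quadratics_below_chord:
  fixes a1 b1 a2 b2 l :: real
  assumes "0 \<le> l" and "l \<le> 1"
  shows "\<exists>s. a1 * s\<^sup>2 + b1 * s \<le> l * (a1 + b1) \<and> a2 * s\<^sup>2 + b2 * s \<le> l * (a2 + b2)"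
proof -
  have chord_param: "a * l\<^sup>2 + b * l \<le> l * (a + b)" if "0 \<le> a" for a b :: real
  proof -
    have "a * l\<^sup>2 + b * l - l * (a + b) = a * (l * (l - 1))"
      by (simp add: power2_eq_square algebra_simps)
    also have "\<dots> \<le> 0"
      using assms that by (simp add: mult_nonneg_nonpos)
    finally show ?thesis by simp
  qed
  consider "0 \<le> a1" "0 \<le> a2" | "a1 < 0" | "a2 < 0" by linarith
  then show ?thesis
  proof cases
    case 1
    then show ?thesis using chord_param by blast
  next
    case 2
    then show ?thesis using two_quadratics_below_chord_concave assms by blast
  next
    case 3
    then show ?thesis using two_quadratics_below_chord_concave[of a2 l b2 a1 b1] assms by blast
  qed
qed

lemma quadratic_fun_along_line:
  "quadratic_fun Q q c (x + s *\<^sub>R d) =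
     quadratic_fun Q q c x + (d \<bullet> (Q *v d)) * s\<^sup>2 + (d \<bullet> (Q *v x) + x \<bullet> (Q *v d) + q \<bullet> d) * s"
  unfolding quadratic_fun_def
  by (simp add: matrix_vector_right_distrib matrix_vector_mult_scaleR inner_add_left
      inner_add_right algebra_simps power2_eq_square)

lemma quadratic_pair_below_chord:
  fixes M :: "(real^'n) set" and Q1 Q2 :: "real^'n^'n" and q1 q2 :: "real^'n" and c1 c2 :: real
  defines "f \<equiv> quadratic_fun Q1 q1 c1" and "g \<equiv> quadratic_fun Q2 q2 c2"
  assumes "affine M" and "x \<in> M" and "y \<in> M" and "0 \<le> t" and "t \<le> 1"
  shows "\<exists>z\<in>M. f z \<le> (1 - t) * f x + t * f y \<and> g z \<le> (1 - t) * g x + t * g y"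
proof -
  define d where "d = y - x"
  define a1 b1 where "a1 = d \<bullet> (Q1 *v d)" and "b1 = d \<bullet> (Q1 *v x) + x \<bullet> (Q1 *v d) + q1 \<bullet> d"
  define a2 b2 where "a2 = d \<bullet> (Q2 *v d)" and "b2 = d \<bullet> (Q2 *v x) + x \<bullet> (Q2 *v d) + q2 \<bullet> d"
  have f: "f (x + s *\<^sub>R d) = f x + a1 * s\<^sup>2 + b1 * s"
    and g: "g (x + s *\<^sub>R d) = g x + a2 * s\<^sup>2 + b2 * s" for s
    unfolding f_def g_def a1_def b1_def a2_def b2_def by (rule quadratic_fun_along_line)+
  have "y = x + 1 *\<^sub>R d" by (simp add: d_def)
  then have fy: "f y = f x + a1 + b1" and gy: "g y = g x + a2 + b2"
    using f[of 1] g[of 1] by simp_all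
  obtain s where s: "a1 * s\<^sup>2 + b1 * s \<le> t * (a1 + b1)" "a2 * s\<^sup>2 + b2 * s \<le> t * (a2 + b2)"
    using two_quadratics_below_chord[OF \<open>0 \<le> t\<close> \<open>t \<le> 1\<close>] by blast
  have "x + s *\<^sub>R d = (1 - s) *\<^sub>R x + s *\<^sub>R y"
    by (simp add: d_def algebra_simps)
  then have "x + s *\<^sub>R d \<in> M"
    using \<open>affine M\<close> \<open>x \<in> M\<close> \<open>y \<in> M\<close> unfolding affine_alt by simp
  moreover have "f (x + s *\<^sub>R d) \<le> (1 - t) * f x + t * f y"
    "g (x + s *\<^sub>R d) \<le> (1 - t) * g x + t * g y"
    using s by (simp_all add: f g fy gy algebra_simps)
  ultimately show ?thesis by blast
qed

theorem theorem4p1: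
  fixes M :: "(real^'n) set"
    and Q1 Q2 :: "real^'n^'n" and q1 q2 :: "real^'n" and c1 c2 :: real
  assumes "affine M"
    and "transpose Q1 = Q1" and "transpose Q2 = Q2"
  shows "convex (minkowski_sum
           ((\<lambda>x. (quadratic_fun Q1 q1 c1 x, quadratic_fun Q2 q2 c2 x)) ` M)
           nonneg_orthant2)"
proof (rule convex_minkowski_sum_nonneg_orthant2)
  fix a b and t :: real
  assume "a \<in> (\<lambda>x. (quadratic_fun Q1 q1 c1 x, quadratic_fun Q2 q2 c2 x)) ` M"
    and "b \<in> (\<lambda>x. (quadratic_fun Q1 q1 c1 x, quadratic_fun Q2 q2 c2 x)) ` M"
    and "0 \<le> t" and "t \<le> 1"
  then show "\<exists>c\<in>(\<lambda>x. (quadratic_fun Q1 q1 c1 x, quadratic_fun Q2 q2 c2 x)) ` M.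
      fst c \<le> (1 - t) * fst a + t * fst b \<and> snd c \<le> (1 - t) * snd a + t * snd b"
    using quadratic_pair_below_chord[OF \<open>affine M\<close>] by fastforce
qed

end
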